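(* Let $\mathbb{K}=\mathbb{R}$ or $\mathbb{C}$, let $V,W$ be finite-dimensional $\mathbb{K}$-vector spaces, and let $A(\xi):V\to W$, $\xi\in\mathbb{K}^d$, be a homogeneous symbol of degree $k$ (a $\operatorname{Lin}(V,W)$-valued map whose matrix entries are homogeneous polynomials of degree $k$ in $\xi$ with coefficients in $\mathbb{K}$). The following are equivalent: (1) there is an integer $r$ such that $\operatorname{rank}_{\mathbb K}A(\xi)=r$ for all $\xi\in\mathbb{K}^d\setminus\{0\}$; (2) there exist finite-dimensional $\mathbb{K}$-vector spaces $U,X$ and homogeneous symbols $B(\xi):U\to V$ and $Q(\xi):W\to X$ on $\mathbb{K}^d$ such that $\operatorname{im}B(\xi)=\ker A(\xi)$ and $\operatorname{im}A(\xi)=\ker Q(\xi)$ for all $\xi\in\mathbb{K}^d\setminus\{0\}$. Moreover, if (1) holds, then in (2) one can always take $B(\xi)$ and $Q(\xi)$ homogeneous of order $rk$. *)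

theory Defs
  imports Complex_Main "Jordan_Normal_Form.DL_Rank" "Jordan_Normal_Form.Matrix_Kernel"
begin

text \<open>Points of K^d are represented as functions xi :: nat => K; only the
 coordinates xi 0, ..., xi (d-1) are used.  Multi-indices alpha are functions
 nat => nat vanishing outside {0..<d}.\<close>

definition monomials_deg :: "nat \<Rightarrow> nat \<Rightarrow> (nat \<Rightarrow> nat) set" where
  "monomials_deg d k = {\<alpha>. (\<forall>i. d \<le> i \<longrightarrow> \<alpha> i = 0) \<and> (\<Sum>i<d. \<alpha> i) = k}"

definition hom_poly_fun :: "nat \<Rightarrow> nat \<Rightarrow> ((nat \<Rightarrow> 'a::comm_ring_1) \<Rightarrow> 'a) \<Rightarrow> bool" where
  "hom_poly_fun d k f \<longleftrightarrow>
     (\<exists>c :: (nat \<Rightarrow> nat) \<Rightarrow> 'a. \<forall>\<xi>. f \<xi> = (\<Sum>\<alpha>\<in>monomials_deg d k. c \<alpha> * (\<Prod>i<d. \<xi> i ^ \<alpha> i)))"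

definition hom_symbol :: "nat \<Rightarrow> nat \<Rightarrow> nat \<Rightarrow> nat \<Rightarrow> ((nat \<Rightarrow> 'a::comm_ring_1) \<Rightarrow> 'a mat) \<Rightarrow> bool" where
  "hom_symbol d k m n A \<longleftrightarrow>
     (\<forall>\<xi>. A \<xi> \<in> carrier_mat m n) \<and> (\<forall>i<m. \<forall>j<n. hom_poly_fun d k (\<lambda>\<xi>. A \<xi> $$ (i, j)))"

definition mat_image :: "'a::comm_ring_1 mat \<Rightarrow> 'a vec set" where
  "mat_image A = {A *\<^sub>v u | u. u \<in> carrier_vec (dim_col A)}"

definition nonzero_pt :: "nat \<Rightarrow> (nat \<Rightarrow> 'a::zero) \<Rightarrow> bool" where
  "nonzero_pt d \<xi> \<longleftrightarrow> (\<exists>i<d. \<xi> i \<noteq> 0)"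

end

theory Submission
  imports Defs
begin

text \<open>
  If \<open>rank A(\<xi>) = r\<close> for all \<open>\<xi> \<noteq> 0\<close>, then all \<open>(r+1)\<close>-minors of \<open>A(\<xi>)\<close> vanish and some
  \<open>r\<close>-minor does not.  By Cramer's rule a vector \<open>w\<close> lies in the image of \<open>A(\<xi>)\<close> iff every
  \<open>(r+1)\<close>-minor of the bordered matrix \<open>[A(\<xi>) | w]\<close> using the border column vanishes.
  Expanded along that column these minors are linear forms in \<open>w\<close> whose coefficients are signed
  \<open>r\<close>-minors of \<open>A(\<xi>)\<close>; they are the rows of \<open>Q(\<xi>)\<close>, homogeneous of degree \<open>rk\<close>.  Dually,
  expanding \<open>(r+1)\<close>-minors along a bordering row gives the columns of \<open>B(\<xi>)\<close>: they are
  annihilated by \<open>A(\<xi>)\<close>, and a nonzero \<open>r\<close>-minor expresses every kernel vector through them.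

  Conversely, \<open>im A(\<xi>) = ker Q(\<xi>)\<close> gives \<open>rank A(\<xi>) + rank Q(\<xi>) = m\<close> by rank-nullity.  A minor
  that is nonzero at some point of a line is nonzero at all but finitely many of its points, so
  for nonzero \<open>x\<^sub>1, x\<^sub>2\<close> some nonzero \<open>y\<close> on the line through them has
  \<open>rank A(y) \<ge> rank A(x\<^sub>1)\<close> and \<open>rank Q(y) \<ge> rank Q(x\<^sub>2)\<close>; hence
  \<open>rank A(x\<^sub>1) \<le> m - rank Q(x\<^sub>2) = rank A(x\<^sub>2)\<close>.
\<close>

section \<open>Minors\<close>

definition minor :: "'a::comm_ring_1 mat \<Rightarrow> (nat \<Rightarrow> nat) \<Rightarrow> (nat \<Rightarrow> nat) \<Rightarrow> nat \<Rightarrow> 'a" where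
  "minor M f g s = det (mat s s (\<lambda>(i, j). M $$ (f i, g j)))"

definition valid_minor :: "'a mat \<Rightarrow> (nat \<Rightarrow> nat) \<Rightarrow> (nat \<Rightarrow> nat) \<Rightarrow> nat \<Rightarrow> bool" where
  "valid_minor M f g s \<longleftrightarrow> (\<forall>i<s. f i < dim_row M) \<and> (\<forall>j<s. g j < dim_col M)"

definition idx_cons :: "nat \<Rightarrow> (nat \<Rightarrow> nat) \<Rightarrow> nat \<Rightarrow> nat" where
  "idx_cons i f = (\<lambda>a. if a = 0 then i else f (a - 1))"

definition idx_snoc :: "nat \<Rightarrow> (nat \<Rightarrow> nat) \<Rightarrow> nat \<Rightarrow> nat \<Rightarrow> nat" where
  "idx_snoc r g l = (\<lambda>b. if b < r then g b else l)"

text \<open>\<open>idx_skip a\<close> enumerates the indices other than \<open>a\<close>; composing a selection with it deletes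
  its \<open>a\<close>-th row or column.\<close>
definition idx_skip :: "nat \<Rightarrow> nat \<Rightarrow> nat" where
  "idx_skip a i = (if i < a then i else Suc i)"

lemma valid_minor_carrier:
  "M \<in> carrier_mat m n \<Longrightarrow> valid_minor M f g s \<longleftrightarrow> (\<forall>i<s. f i < m) \<and> (\<forall>j<s. g j < n)"
  unfolding valid_minor_def by auto

lemma minor_cong:
  assumes "\<And>i j. i < s \<Longrightarrow> j < s \<Longrightarrow> M $$ (f i, g j) = M' $$ (f' i, g' j)"
  shows "minor M f g s = minor M' f' g' s"
  unfolding minor_def using assms by (intro arg_cong[where f = det] eq_matI) auto

lemma cofactor_mat_Suc:
  "cofactor (mat (Suc r) (Suc r) (\<lambda>(i, j). G i j)) a b
     = (-1)^(a + b) * det (mat r r (\<lambda>(i, j). G (idx_skip a i) (idx_skip b j)))"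
proof -
  have "mat_delete (mat (Suc r) (Suc r) (\<lambda>(i, j). G i j)) a b
      = mat r r (\<lambda>(i, j). G (idx_skip a i) (idx_skip b j))"
    unfolding mat_delete_def idx_skip_def by (intro eq_matI) auto
  then show ?thesis unfolding cofactor_def by simp
qed

lemma sum_mult_pushforward:
  fixes F :: "nat \<Rightarrow> 'a::comm_ring_1"
  assumes "\<And>j. j < r \<Longrightarrow> g j < n"
  shows "(\<Sum>l<n. F l * (\<Sum>j<r. if g j = l then c j else 0)) = (\<Sum>j<r. F (g j) * c j)"
proof -
  have "(\<Sum>l<n. F l * (\<Sum>j<r. if g j = l then c j else 0))
      = (\<Sum>j<r. \<Sum>l<n. if l = g j then F l * c j else 0)"
    unfolding sum_distrib_left by (subst sum.swap) (intro sum.cong refl, auto)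
  also have "\<dots> = (\<Sum>j<r. F (g j) * c j)" using assms by (intro sum.cong) (auto simp: sum.delta)
  finally show ?thesis .
qed

lemma det_bordered_col:
  "det (mat (Suc r) (Suc r) (\<lambda>(a, b). if b < r then M $$ (F a, G b) else w $ (F a)))
    = (\<Sum>a<Suc r. w $ (F a) * ((-1)^(a + r) * minor M (\<lambda>i. F (idx_skip a i)) G r))"
proof -
  let ?N = "mat (Suc r) (Suc r) (\<lambda>(a, b). if b < r then M $$ (F a, G b) else w $ (F a))"
  have "cofactor ?N a r = (-1)^(a + r) * minor M (\<lambda>i. F (idx_skip a i)) G r" for a
  proof -
    have "cofactor ?N a r = (-1)^(a + r) * det (mat r r (\<lambda>(i, j).
        if idx_skip r j < r then M $$ (F (idx_skip a i), G (idx_skip r j)) else w $ (F (idx_skip a i))))"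
      by (rule cofactor_mat_Suc)
    also have "mat r r (\<lambda>(i, j). if idx_skip r j < r then M $$ (F (idx_skip a i), G (idx_skip r j))
        else w $ (F (idx_skip a i))) = mat r r (\<lambda>(i, j). M $$ (F (idx_skip a i), G j))"
      by (intro eq_matI) (auto simp: idx_skip_def)
    finally show ?thesis unfolding minor_def .
  qed
  then show ?thesis
    by (subst laplace_expansion_column[of _ "Suc r" r]) auto
qed

lemma det_bordered_row:
  "det (mat (Suc r) (Suc r) (\<lambda>(a, b). M $$ (idx_cons i F a, G b)))
    = (\<Sum>b<Suc r. M $$ (i, G b) * ((-1)^b * minor M F (\<lambda>j. G (idx_skip b j)) r))"
proof -
  let ?N = "mat (Suc r) (Suc r) (\<lambda>(a, b). M $$ (idx_cons i F a, G b))"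
  have "cofactor ?N 0 b = (-1)^b * minor M F (\<lambda>j. G (idx_skip b j)) r" for b
  proof -
    have "cofactor ?N 0 b = (-1)^(0 + b) * det (mat r r (\<lambda>(a, j). M $$ (idx_cons i F (idx_skip 0 a), G (idx_skip b j))))"
      by (rule cofactor_mat_Suc)
    also have "mat r r (\<lambda>(a, j). M $$ (idx_cons i F (idx_skip 0 a), G (idx_skip b j)))
        = mat r r (\<lambda>(a, j). M $$ (F a, G (idx_skip b j)))"
      by (intro eq_matI) (auto simp: idx_skip_def idx_cons_def)
    finally show ?thesis unfolding minor_def by simp
  qed
  then show ?thesis
    by (subst laplace_expansion_row[of _ "Suc r" 0]) (auto simp: idx_cons_def)
qed

lemma minor_cols_independent:
  fixes M :: "'a::field mat"
  assumes "valid_minor M f g s" and "minor M f g s \<noteq> 0"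
    and comb: "\<And>i. i < dim_row M \<Longrightarrow> (\<Sum>j<s. M $$ (i, g j) * c j) = 0"
    and "j < s"
  shows "c j = 0"
proof -
  define S where "S = mat s s (\<lambda>(i, j). M $$ (f i, g j))"
  have S: "S \<in> carrier_mat s s" unfolding S_def by simp
  have "S *\<^sub>v vec s c = 0\<^sub>v s"
    using assms(1) comb unfolding S_def valid_minor_def
    by (intro eq_vecI) (auto simp: scalar_prod_def atLeast0LessThan)
  moreover have "det S \<noteq> 0" using assms(2) unfolding minor_def S_def .
  ultimately have "vec s c = 0\<^sub>v s" using det_0_iff_vec_prod_zero_field[OF S] vec_carrier by blast
  then show ?thesis using \<open>j < s\<close> by (metis index_vec index_zero_vec(1))
qed

lemma kernel_vec_on_minor_cols_eq_0:
  fixes A :: "'a::field mat"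
  assumes A: "A \<in> carrier_mat m n" and fg: "valid_minor A f g r" "minor A f g r \<noteq> 0"
    and z: "z \<in> mat_kernel A" and supp: "\<And>l. l < n \<Longrightarrow> z $ l = (\<Sum>j<r. if g j = l then e j else 0)"
  shows "z = 0\<^sub>v n"
proof -
  have zc: "z \<in> carrier_vec n" and Az: "A *\<^sub>v z = 0\<^sub>v m" using mat_kernelD[OF A z] by auto
  have g: "g j < n" if "j < r" for j using fg(1) A that unfolding valid_minor_def by auto
  have comb: "(\<Sum>j<r. A $$ (i, g j) * e j) = 0" if i: "i < dim_row A" for i
  proof -
    have "(A *\<^sub>v z) $ i = (\<Sum>l<n. A $$ (i, l) * (\<Sum>j<r. if g j = l then e j else 0))"
      using A i zc by (simp add: supp scalar_prod_def atLeast0LessThan)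
    also have "\<dots> = (\<Sum>j<r. A $$ (i, g j) * e j)" by (rule sum_mult_pushforward[OF g])
    finally show ?thesis using Az A i by simp
  qed
  have "e j = 0" if "j < r" for j by (rule minor_cols_independent[OF fg comb that])
  then have "z $ l = 0" if "l < n" for l unfolding supp[OF that] by (intro sum.neutral) auto
  then show ?thesis using zc by (intro eq_vecI) auto
qed

text \<open>Cramer's rule: the coefficients are the cofactors along the bordering row.\<close>
lemma col_in_span_of_minor_cols:
  fixes M :: "'a::field mat"
  assumes M: "M \<in> carrier_mat n N" and nz: "minor M f g r \<noteq> 0"
    and vanish: "\<And>i. i < n \<Longrightarrow> minor M (idx_cons i f) (idx_snoc r g l) (Suc r) = 0"
  shows "\<exists>c. \<forall>i<n. M $$ (i, l) = (\<Sum>j<r. c j * M $$ (i, g j))"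
proof -
  define D where "D b = (-1)^b * minor M f (\<lambda>j. idx_snoc r g l (idx_skip b j)) r" for b
  have "minor M f (\<lambda>j. idx_snoc r g l (idx_skip r j)) r = minor M f g r"
    by (rule minor_cong) (simp add: idx_snoc_def idx_skip_def)
  then have Dr: "D r \<noteq> 0" using nz unfolding D_def by simp
  have "M $$ (i, l) = (\<Sum>j<r. (- D j / D r) * M $$ (i, g j))" if "i < n" for i
  proof -
    have "(\<Sum>b<Suc r. M $$ (i, idx_snoc r g l b) * D b) = 0"
      using vanish[OF that] unfolding minor_def det_bordered_row D_def .
    then have "M $$ (i, l) * D r = - (\<Sum>j<r. M $$ (i, g j) * D j)"
      by (simp add: idx_snoc_def eq_neg_iff_add_eq_0 add.commute)
    then have "M $$ (i, l) = - (\<Sum>j<r. M $$ (i, g j) * D j) / D r"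
      using Dr by (metis nonzero_mult_div_cancel_right)
    also have "\<dots> = (\<Sum>j<r. (- D j / D r) * M $$ (i, g j))"
      by (simp add: sum_divide_distrib sum_negf[symmetric] mult.commute)
    finally show ?thesis .
  qed
  then show ?thesis by (intro exI[of _ "\<lambda>j. - D j / D r"]) blast
qed

section \<open>Rank, minors and rank-nullity\<close>

context vec_space
begin

lemma span_cols_eq_mat_image:
  assumes "A \<in> carrier_mat n nc"
  shows "span (set (cols A)) = mat_image A"
  using col_space_eq[OF assms] assms unfolding col_space_def mat_image_def by auto

lemma rank_eq_dim_mat_image:
  "A \<in> carrier_mat n nc \<Longrightarrow> rank A = vectorspace.dim class_ring (vs (mat_image A))"
  unfolding rank_def by (simp add: span_cols_eq_mat_image)

lemma rank_le_if_cols_in_span: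
  assumes A: "A \<in> carrier_mat n a" and B: "B \<in> carrier_mat n b"
    and sub: "set (cols B) \<subseteq> span (set (cols A))"
  shows "rank B \<le> rank A"
proof -
  have cA: "set (cols A) \<subseteq> carrier_vec n" and cB: "set (cols B) \<subseteq> carrier_vec n"
    using A B cols_dim by blast+
  have subA: "subspace class_ring (span (set (cols A))) V" by (rule span_is_subspace[OF cA])
  have "span (set (cols B)) \<subseteq> span (set (cols A))"
    by (rule span_is_subset[OF sub span_is_submodule[OF cA]])
  then have "subspace class_ring (span (set (cols B))) (vs (span (set (cols A))))"
    by (rule nested_subspaces[OF subA span_is_subspace[OF cB]])
  then show ?thesis
    using vectorspace.subspace_dim[OF subspace_is_vs[OF subA] _ fin_dim_span_cols[OF A]]
      fin_dim_span_cols[OF B]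
    unfolding rank_def by simp
qed

end

lemma mult_mat_vec_linear_map:
  fixes A :: "'a::field mat"
  assumes A: "A \<in> carrier_mat n nc"
  shows "linear_map class_ring (module_vec TYPE('a) nc) (module_vec TYPE('a) n) (\<lambda>v. A *\<^sub>v v)"
proof -
  have "(\<lambda>v. A *\<^sub>v v) \<in> LinearCombinations.module_hom class_ring (module_vec TYPE('a) nc) (module_vec TYPE('a) n)"
    using A by (auto simp: LinearCombinations.module_hom_def module_vec_simps mult_add_distrib_mat_vec mult_mat_vec)
  then show ?thesis
    by (intro linear_map.intro vec_vs mod_hom.intro mod_hom_axioms.intro vec_module)
qed

lemma rank_nullity_mat:
  fixes A :: "'a::field mat"
  assumes A: "A \<in> carrier_mat n nc"
  shows "vec_space.rank n A
    + vectorspace.dim class_ring ((module_vec TYPE('a) nc)\<lparr>carrier := mat_kernel A\<rparr>) = nc"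
proof -
  interpret T: linear_map class_ring "module_vec TYPE('a) nc" "module_vec TYPE('a) n" "\<lambda>v. A *\<^sub>v v"
    by (rule mult_mat_vec_linear_map[OF A])
  interpret V: vec_space "TYPE('a)" nc .
  have "T.imT = mat_image A"
    using A unfolding T.im_def mat_image_def by (auto simp: module_vec_simps)
  moreover have "T.kerT = mat_kernel A"
    using A unfolding T.ker_def mat_kernel_def by (auto simp: module_vec_simps)
  ultimately show ?thesis
    using T.rank_nullity[OF V.fin_dim] V.dim_is_n vec_space.rank_eq_dim_mat_image[OF A] by simp
qed

lemma rank_eq_if_trivial_kernel:
  fixes C :: "'a::field mat"
  assumes C: "C \<in> carrier_mat n s" and ker: "mat_kernel C \<subseteq> {0\<^sub>v s}"
  shows "vec_space.rank n C = s"
proof -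
  interpret S: vec_space "TYPE('a)" s .
  have "C *\<^sub>v 0\<^sub>v s = 0\<^sub>v n" using C by (intro eq_vecI) auto
  then have "mat_kernel C = S.span {}"
    using ker C by (auto simp: S.span_empty module_vec_simps intro: mat_kernelI)
  then show ?thesis using rank_nullity_mat[OF C] S.dim_zero_vs by simp
qed

lemma rank_add_rank_eq_if_exact:
  fixes A Q :: "'a::field mat"
  assumes A: "A \<in> carrier_mat m n" and Q: "Q \<in> carrier_mat q m"
    and exact: "mat_image A = mat_kernel Q"
  shows "vec_space.rank m A + vec_space.rank q Q = m"
  using rank_nullity_mat[OF Q] exact vec_space.rank_eq_dim_mat_image[OF A] by simp

context vec_space
begin

lemma minor_le_rank:
  assumes M: "M \<in> carrier_mat n N" and minor: "valid_minor M f g s" "minor M f g s \<noteq> 0"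
  shows "s \<le> rank M"
proof -
  define C where "C = mat n s (\<lambda>(i, j). M $$ (i, g j))"
  have C: "C \<in> carrier_mat n s" unfolding C_def by simp
  have "mat_kernel C \<subseteq> {0\<^sub>v s}"
  proof
    fix v assume "v \<in> mat_kernel C"
    then have v: "v \<in> carrier_vec s" and Cv: "C *\<^sub>v v = 0\<^sub>v n" using mat_kernelD[OF C] by auto
    have comb: "(\<Sum>j<s. M $$ (i, g j) * v $ j) = 0" if "i < dim_row M" for i
    proof -
      have "(\<Sum>j<s. M $$ (i, g j) * v $ j) = (C *\<^sub>v v) $ i"
        using that M v by (simp add: C_def scalar_prod_def atLeast0LessThan)
      then show ?thesis using Cv that M by simp
    qed
    have "v $ j = 0" if "j < s" for j by (rule minor_cols_independent[OF minor comb that])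
    then show "v \<in> {0\<^sub>v s}" using v by (auto intro: eq_vecI)
  qed
  then have "rank C = s" by (rule rank_eq_if_trivial_kernel[OF C])
  moreover have "set (cols C) \<subseteq> span (set (cols M))"
  proof
    fix x assume "x \<in> set (cols C)"
    then obtain j where j: "j < s" "x = col C j" using C by (auto simp: cols_def)
    moreover have "g j < N" using j minor(1) M unfolding valid_minor_def by auto
    ultimately have "x = col M (g j)" using M by (auto simp: C_def intro!: eq_vecI)
    with \<open>g j < N\<close> have "x \<in> set (cols M)" using M by (auto simp: cols_def)
    then show "x \<in> span (set (cols M))" using M cols_dim[of M] by (intro span_mem) auto
  qed
  ultimately show ?thesis using rank_le_if_cols_in_span[OF M C] by simp
qed

lemma rank_le_if_bordered_minors_vanish:
  assumes M: "M \<in> carrier_mat n N" and nz: "minor M f g r \<noteq> 0"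
    and vanish: "\<And>i l. i < n \<Longrightarrow> l < N \<Longrightarrow> minor M (idx_cons i f) (idx_snoc r g l) (Suc r) = 0"
  shows "rank M \<le> r"
proof -
  define C where "C = mat n r (\<lambda>(i, j). M $$ (i, g j))"
  have C: "C \<in> carrier_mat n r" unfolding C_def by simp
  have "set (cols M) \<subseteq> span (set (cols C))"
  proof
    fix x assume "x \<in> set (cols M)"
    then obtain l where l: "l < N" "x = col M l" using M by (auto simp: cols_def)
    obtain c where c: "\<forall>i<n. M $$ (i, l) = (\<Sum>j<r. c j * M $$ (i, g j))"
      using col_in_span_of_minor_cols[OF M nz vanish[OF _ l(1)]] by blast
    have "x = C *\<^sub>v vec r c"
      using l M c by (intro eq_vecI) (auto simp: C_def scalar_prod_def atLeast0LessThan mult.commute)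
    then show "x \<in> span (set (cols C))"
      unfolding span_cols_eq_mat_image[OF C] mat_image_def using C by auto
  qed
  then have "rank M \<le> rank C" by (rule rank_le_if_cols_in_span[OF C M])
  also have "rank C \<le> r" by (rule rank_le_nc[OF C])
  finally show ?thesis .
qed

lemma minor_eq_0_if_rank_less:
  assumes M: "M \<in> carrier_mat n N" and "valid_minor M f g s" "rank M < s"
  shows "minor M f g s = 0"
proof (rule ccontr)
  assume "minor M f g s \<noteq> 0"
  then have "s \<le> rank M" by (rule minor_le_rank[OF M \<open>valid_minor M f g s\<close>])
  with \<open>rank M < s\<close> show False by simp
qed

lemma rank_minor_exists:
  assumes M: "M \<in> carrier_mat n N"
  obtains f g where "valid_minor M f g (rank M)" "minor M f g (rank M) \<noteq> 0"
proof -
  define S where "S = {s. \<exists>f g. valid_minor M f g s \<and> minor M f g s \<noteq> 0}"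
  have "S \<subseteq> {..rank M}" using minor_le_rank[OF M] unfolding S_def by blast
  then have "finite S" by (rule finite_subset) simp
  moreover have "0 \<in> S" unfolding S_def minor_def valid_minor_def by auto
  ultimately have "Max S \<in> S" using Max_in by blast
  then obtain f g where fg: "valid_minor M f g (Max S)" "minor M f g (Max S) \<noteq> 0"
    unfolding S_def by blast
  have "minor M (idx_cons i f) (idx_snoc (Max S) g l) (Suc (Max S)) = 0" if "i < n" "l < N" for i l
  proof (rule ccontr)
    assume "minor M (idx_cons i f) (idx_snoc (Max S) g l) (Suc (Max S)) \<noteq> 0"
    moreover have "valid_minor M (idx_cons i f) (idx_snoc (Max S) g l) (Suc (Max S))"
      using fg(1) that M unfolding valid_minor_def idx_cons_def idx_snoc_def by auto
    ultimately have "Suc (Max S) \<in> S" unfolding S_def by blast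
    then have "Suc (Max S) \<le> Max S" by (rule Max_ge[OF \<open>finite S\<close>])
    then show False by simp
  qed
  then have "rank M \<le> Max S" by (rule rank_le_if_bordered_minors_vanish[OF M fg(2)])
  with minor_le_rank[OF M fg] have "rank M = Max S" by simp
  then show ?thesis using fg that by simp
qed

end

section \<open>Homogeneous polynomial functions\<close>

definition monom_fun :: "nat \<Rightarrow> (nat \<Rightarrow> nat) \<Rightarrow> (nat \<Rightarrow> 'a::comm_ring_1) \<Rightarrow> 'a" where
  "monom_fun d \<alpha> \<xi> = (\<Prod>i<d. \<xi> i ^ \<alpha> i)"

lemma hom_poly_fun_iff:
  "hom_poly_fun d k f \<longleftrightarrow> (\<exists>c. \<forall>\<xi>. f \<xi> = (\<Sum>\<alpha>\<in>monomials_deg d k. c \<alpha> * monom_fun d \<alpha> \<xi>))"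
  unfolding hom_poly_fun_def monom_fun_def ..

lemma finite_monomials_deg: "finite (monomials_deg d k)"
proof (rule finite_subset)
  show "monomials_deg d k \<subseteq> {\<alpha>. \<forall>i. (i \<in> {..<d} \<longrightarrow> \<alpha> i \<in> {..k}) \<and> (i \<notin> {..<d} \<longrightarrow> \<alpha> i = 0)}"
  proof
    fix \<alpha> assume \<alpha>: "\<alpha> \<in> monomials_deg d k"
    have "\<alpha> i \<le> k" if "i < d" for i
      using member_le_sum[of i "{..<d}" \<alpha>] \<alpha> that unfolding monomials_deg_def by auto
    then show "\<alpha> \<in> {\<alpha>. \<forall>i. (i \<in> {..<d} \<longrightarrow> \<alpha> i \<in> {..k}) \<and> (i \<notin> {..<d} \<longrightarrow> \<alpha> i = 0)}"
      using \<alpha> unfolding monomials_deg_def by auto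
  qed
qed (rule finite_set_of_finite_funs; simp)

lemma monomials_deg_0: "monomials_deg d 0 = {\<lambda>_. 0}"
  unfolding monomials_deg_def by (auto simp: fun_eq_iff) (metis lessThan_iff not_le)

lemma hom_poly_fun_const: "hom_poly_fun d 0 (\<lambda>_. a)"
  unfolding hom_poly_fun_iff monomials_deg_0 by (auto simp: monom_fun_def)

lemma hom_poly_fun_zero: "hom_poly_fun d k (\<lambda>_. 0)"
  unfolding hom_poly_fun_iff by (rule exI[of _ "\<lambda>_. 0"]) simp

lemma hom_poly_fun_add:
  assumes "hom_poly_fun d k F" "hom_poly_fun d k G"
  shows "hom_poly_fun d k (\<lambda>\<xi>. F \<xi> + G \<xi>)"
proof -
  obtain c1 c2 where
    "\<And>\<xi>. F \<xi> = (\<Sum>\<alpha>\<in>monomials_deg d k. c1 \<alpha> * monom_fun d \<alpha> \<xi>)"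
    "\<And>\<xi>. G \<xi> = (\<Sum>\<alpha>\<in>monomials_deg d k. c2 \<alpha> * monom_fun d \<alpha> \<xi>)"
    using assms unfolding hom_poly_fun_iff by metis
  then show ?thesis unfolding hom_poly_fun_iff
    by (intro exI[of _ "\<lambda>\<alpha>. c1 \<alpha> + c2 \<alpha>"]) (simp add: sum.distrib distrib_right)
qed

lemma hom_poly_fun_cmult:
  assumes "hom_poly_fun d k F"
  shows "hom_poly_fun d k (\<lambda>\<xi>. a * F \<xi>)"
proof -
  obtain c where "\<And>\<xi>. F \<xi> = (\<Sum>\<alpha>\<in>monomials_deg d k. c \<alpha> * monom_fun d \<alpha> \<xi>)"
    using assms unfolding hom_poly_fun_iff by blast
  then show ?thesis unfolding hom_poly_fun_iff
    by (intro exI[of _ "\<lambda>\<alpha>. a * c \<alpha>"]) (simp add: sum_distrib_left mult.assoc)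
qed

lemma hom_poly_fun_sum:
  assumes "finite S" "\<And>s. s \<in> S \<Longrightarrow> hom_poly_fun d k (F s)"
  shows "hom_poly_fun d k (\<lambda>\<xi>. \<Sum>s\<in>S. F s \<xi>)"
  using assms by (induction S rule: finite_induct) (auto intro: hom_poly_fun_zero hom_poly_fun_add)

lemma hom_poly_fun_mult:
  assumes "hom_poly_fun d k1 F" "hom_poly_fun d k2 G"
  shows "hom_poly_fun d (k1 + k2) (\<lambda>\<xi>. F \<xi> * G \<xi>)"
proof -
  obtain c1 c2 where
    c1: "\<And>\<xi>. F \<xi> = (\<Sum>\<alpha>\<in>monomials_deg d k1. c1 \<alpha> * monom_fun d \<alpha> \<xi>)" and
    c2: "\<And>\<xi>. G \<xi> = (\<Sum>\<beta>\<in>monomials_deg d k2. c2 \<beta> * monom_fun d \<beta> \<xi>)"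
    using assms unfolding hom_poly_fun_iff by metis
  define S where "S = monomials_deg d k1 \<times> monomials_deg d k2"
  define T where "T = monomials_deg d (k1 + k2)"
  define plus :: "(nat \<Rightarrow> nat) \<times> (nat \<Rightarrow> nat) \<Rightarrow> nat \<Rightarrow> nat"
    where "plus = (\<lambda>(\<alpha>, \<beta>) i. \<alpha> i + \<beta> i)"
  define C where "C \<gamma> = (\<Sum>x\<in>{x \<in> S. plus x = \<gamma>}. c1 (fst x) * c2 (snd x))" for \<gamma>
  have ST: "plus ` S \<subseteq> T" unfolding S_def T_def plus_def monomials_deg_def by (auto simp: sum.distrib)
  have monom: "monom_fun d \<alpha> \<xi> * monom_fun d \<beta> \<xi> = monom_fun d (plus (\<alpha>, \<beta>)) \<xi>"
    for \<alpha> \<beta> and \<xi> :: "nat \<Rightarrow> 'a"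
    unfolding monom_fun_def plus_def by (simp add: power_add prod.distrib)
  have "F \<xi> * G \<xi> = (\<Sum>\<gamma>\<in>T. C \<gamma> * monom_fun d \<gamma> \<xi>)" for \<xi>
  proof -
    have "F \<xi> * G \<xi> = (\<Sum>x\<in>S. c1 (fst x) * c2 (snd x) * monom_fun d (plus x) \<xi>)"
      unfolding c1 c2 sum_product S_def sum.cartesian_product
      by (intro sum.cong refl) (auto simp: monom[symmetric] ac_simps)
    also have "\<dots> = (\<Sum>\<gamma>\<in>T. \<Sum>x\<in>{x \<in> S. plus x = \<gamma>}. c1 (fst x) * c2 (snd x) * monom_fun d (plus x) \<xi>)"
      using finite_monomials_deg ST unfolding S_def T_def by (intro sum.group[symmetric]) auto
    also have "\<dots> = (\<Sum>\<gamma>\<in>T. C \<gamma> * monom_fun d \<gamma> \<xi>)"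
      unfolding C_def sum_distrib_right by (intro sum.cong refl) auto
    finally show ?thesis .
  qed
  then show ?thesis unfolding hom_poly_fun_iff T_def by blast
qed

lemma hom_poly_fun_prod:
  assumes "finite S" "\<And>s. s \<in> S \<Longrightarrow> hom_poly_fun d k (F s)"
  shows "hom_poly_fun d (card S * k) (\<lambda>\<xi>. \<Prod>s\<in>S. F s \<xi>)"
  using assms
proof (induction S rule: finite_induct)
  case empty
  then show ?case using hom_poly_fun_const[of d 1] by simp
next
  case (insert x S)
  then have "hom_poly_fun d (k + card S * k) (\<lambda>\<xi>. F x \<xi> * (\<Prod>s\<in>S. F s \<xi>))"
    by (intro hom_poly_fun_mult) auto
  then show ?case using insert by simp
qed

lemma hom_poly_fun_det:
  assumes "\<And>i j. i < s \<Longrightarrow> j < s \<Longrightarrow> hom_poly_fun d k (\<lambda>\<xi>. F \<xi> i j)"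
  shows "hom_poly_fun d (s * k) (\<lambda>\<xi>. det (mat s s (\<lambda>(i, j). F \<xi> i j)))"
proof -
  have det: "det (mat s s (\<lambda>(i, j). F \<xi> i j))
      = (\<Sum>p\<in>{p. p permutes {0..<s}}. signof p * (\<Prod>i\<in>{0..<s}. F \<xi> i (p i)))" for \<xi>
    by (subst det_def'[of _ s]) (auto intro!: sum.cong prod.cong simp: permutes_in_image)
  have "hom_poly_fun d (s * k) (\<lambda>\<xi>. signof p * (\<Prod>i\<in>{0..<s}. F \<xi> i (p i)))"
    if "p permutes {0..<s}" for p
    using hom_poly_fun_prod[of "{0..<s}" d k "\<lambda>i \<xi>. F \<xi> i (p i)"] assms that
    by (intro hom_poly_fun_cmult) (auto simp: permutes_in_image)
  then show ?thesis
    unfolding det by (intro hom_poly_fun_sum finite_permutations) auto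
qed

lemma hom_symbolD:
  assumes "hom_symbol d k m n A"
  shows "A \<xi> \<in> carrier_mat m n" "i < m \<Longrightarrow> j < n \<Longrightarrow> hom_poly_fun d k (\<lambda>\<xi>. A \<xi> $$ (i, j))"
  using assms unfolding hom_symbol_def by auto

lemma hom_poly_fun_minor:
  assumes "hom_symbol d k m n A" "\<And>i. i < s \<Longrightarrow> f i < m" "\<And>j. j < s \<Longrightarrow> g j < n"
  shows "hom_poly_fun d (s * k) (\<lambda>\<xi>. minor (A \<xi>) f g s)"
  unfolding minor_def using hom_symbolD(2)[OF assms(1)] assms(2,3) by (intro hom_poly_fun_det) auto

section \<open>Exactness forces constant rank\<close>

definition poly_fun :: "('a::comm_ring_1 \<Rightarrow> 'a) \<Rightarrow> bool" where
  "poly_fun F \<longleftrightarrow> (\<exists>p. \<forall>t. F t = poly p t)"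

lemma poly_fun_const: "poly_fun (\<lambda>_. c)"
  unfolding poly_fun_def by (rule exI[of _ "[:c:]"]) simp

lemma poly_fun_linear: "poly_fun (\<lambda>t. a + t * b)"
  unfolding poly_fun_def by (rule exI[of _ "[:a, b:]"]) (simp add: algebra_simps)

lemma poly_fun_add: "poly_fun F \<Longrightarrow> poly_fun G \<Longrightarrow> poly_fun (\<lambda>t. F t + G t)"
  unfolding poly_fun_def by (metis poly_add)

lemma poly_fun_mult: "poly_fun F \<Longrightarrow> poly_fun G \<Longrightarrow> poly_fun (\<lambda>t. F t * G t)"
  unfolding poly_fun_def by (metis poly_mult)

lemma poly_fun_sum:
  "finite S \<Longrightarrow> (\<And>s. s \<in> S \<Longrightarrow> poly_fun (F s)) \<Longrightarrow> poly_fun (\<lambda>t. \<Sum>s\<in>S. F s t)"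
  by (induction S rule: finite_induct) (auto intro: poly_fun_const poly_fun_add)

lemma poly_fun_prod:
  "finite S \<Longrightarrow> (\<And>s. s \<in> S \<Longrightarrow> poly_fun (F s)) \<Longrightarrow> poly_fun (\<lambda>t. \<Prod>s\<in>S. F s t)"
  by (induction S rule: finite_induct) (auto intro: poly_fun_const poly_fun_mult)

lemma poly_fun_power: "poly_fun F \<Longrightarrow> poly_fun (\<lambda>t. F t ^ e)"
  by (induction e) (auto intro: poly_fun_const poly_fun_mult)

lemma poly_fun_on_line:
  assumes "hom_poly_fun d k G"
  shows "poly_fun (\<lambda>t. G (\<lambda>i. a i + t * b i))"
proof -
  obtain c where "\<And>\<xi>. G \<xi> = (\<Sum>\<alpha>\<in>monomials_deg d k. c \<alpha> * (\<Prod>i<d. \<xi> i ^ \<alpha> i))"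
    using assms unfolding hom_poly_fun_def by blast
  then have eq: "(\<lambda>t. G (\<lambda>i. a i + t * b i))
      = (\<lambda>t. \<Sum>\<alpha>\<in>monomials_deg d k. c \<alpha> * (\<Prod>i<d. (a i + t * b i) ^ \<alpha> i))"
    by simp
  show ?thesis unfolding eq
    by (intro poly_fun_sum poly_fun_mult poly_fun_const poly_fun_prod poly_fun_power
        poly_fun_linear finite_monomials_deg finite_lessThan)
qed

lemma poly_fun_common_nonzero:
  fixes F G :: "'a::field_char_0 \<Rightarrow> 'a"
  assumes "poly_fun F" "poly_fun G" "F s \<noteq> 0" "G t \<noteq> 0"
  obtains u where "F u \<noteq> 0" "G u \<noteq> 0"
proof -
  obtain p q where "\<And>t. F t = poly p t" "\<And>t. G t = poly q t"
    using assms(1,2) unfolding poly_fun_def by metis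
  moreover from this have "p * q \<noteq> 0" using assms(3,4) by auto
  then obtain u where "poly (p * q) u \<noteq> 0" using poly_all_0_iff_0 by blast
  ultimately show ?thesis using that by auto
qed

text \<open>The witnessing minors and a nonzero coordinate of \<open>x\<^sub>1\<close> are polynomials along the line
  through \<open>x\<^sub>1\<close> and \<open>x\<^sub>2\<close>, so they have a common non-root.\<close>
lemma nonzero_pt_ranks_ge:
  fixes A :: "(nat \<Rightarrow> 'a::field_char_0) \<Rightarrow> 'a mat" and Q :: "(nat \<Rightarrow> 'a) \<Rightarrow> 'a mat"
  assumes hA: "hom_symbol d k m n A" and hQ: "hom_symbol d k' q m Q"
    and x1: "nonzero_pt d x1" and x2: "nonzero_pt d x2"
  obtains y where "nonzero_pt d y"
    "vec_space.rank m (A x1) \<le> vec_space.rank m (A y)"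
    "vec_space.rank q (Q x2) \<le> vec_space.rank q (Q y)"
proof -
  note Ac = hom_symbolD(1)[OF hA] and Qc = hom_symbolD(1)[OF hQ]
  define r where "r = vec_space.rank m (A x1)"
  define h where "h = vec_space.rank q (Q x2)"
  obtain f g where fg: "valid_minor (A x1) f g r" "minor (A x1) f g r \<noteq> 0"
    by (rule vec_space.rank_minor_exists[OF Ac[of x1], folded r_def])
  obtain f' g' where fg': "valid_minor (Q x2) f' g' h" "minor (Q x2) f' g' h \<noteq> 0"
    by (rule vec_space.rank_minor_exists[OF Qc[of x2], folded h_def])
  obtain i0 where i0: "i0 < d" "x1 i0 \<noteq> 0" using x1 unfolding nonzero_pt_def by blast
  define p where "p t = (\<lambda>i. x1 i + t * (x2 i - x1 i))" for t
  have p01: "p 0 = x1" "p 1 = x2" unfolding p_def by auto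
  have vA: "\<forall>i<r. f i < m" "\<forall>j<r. g j < n" and vQ: "\<forall>i<h. f' i < q" "\<forall>j<h. g' j < m"
    using fg(1) fg'(1) valid_minor_carrier[OF Ac] valid_minor_carrier[OF Qc] by auto
  have PA: "poly_fun (\<lambda>t. minor (A (p t)) f g r)" and PQ: "poly_fun (\<lambda>t. minor (Q (p t)) f' g' h)"
    unfolding p_def using vA vQ
    by (auto intro!: poly_fun_on_line hom_poly_fun_minor[OF hA] hom_poly_fun_minor[OF hQ])
  have Pi: "poly_fun (\<lambda>t. p t i0)" unfolding p_def by (rule poly_fun_linear)
  obtain t0 where t0: "minor (A (p t0)) f g r \<noteq> 0" "minor (Q (p t0)) f' g' h \<noteq> 0"
    by (rule poly_fun_common_nonzero[OF PA PQ, of 0 1]) (use fg(2) fg'(2) p01 in simp_all)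
  obtain t where "minor (A (p t)) f g r * minor (Q (p t)) f' g' h \<noteq> 0" "p t i0 \<noteq> 0"
    by (rule poly_fun_common_nonzero[OF poly_fun_mult[OF PA PQ] Pi, of t0 0])
      (use t0 i0(2) p01 in simp_all)
  then have t: "minor (A (p t)) f g r \<noteq> 0" "minor (Q (p t)) f' g' h \<noteq> 0" "p t i0 \<noteq> 0"
    by auto
  have "nonzero_pt d (p t)" using t(3) i0(1) unfolding nonzero_pt_def by blast
  moreover have "r \<le> vec_space.rank m (A (p t))"
    using vec_space.minor_le_rank[OF Ac _ t(1)] vA valid_minor_carrier[OF Ac] by blast
  moreover have "h \<le> vec_space.rank q (Q (p t))"
    using vec_space.minor_le_rank[OF Qc _ t(2)] vQ valid_minor_carrier[OF Qc] by blast
  ultimately show ?thesis using that unfolding r_def h_def by blast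
qed

lemma constant_rank_if_exact:
  fixes A :: "(nat \<Rightarrow> 'a::field_char_0) \<Rightarrow> 'a mat" and Q :: "(nat \<Rightarrow> 'a) \<Rightarrow> 'a mat"
  assumes hA: "hom_symbol d k m n A" and hQ: "hom_symbol d k' q m Q"
    and exact: "\<And>y. nonzero_pt d y \<Longrightarrow> mat_image (A y) = mat_kernel (Q y)"
  shows "\<exists>r. \<forall>x. nonzero_pt d x \<longrightarrow> vec_space.rank m (A x) = r"
proof -
  have rank_sum: "vec_space.rank m (A y) + vec_space.rank q (Q y) = m" if "nonzero_pt d y" for y
    using rank_add_rank_eq_if_exact[OF hom_symbolD(1)[OF hA] hom_symbolD(1)[OF hQ] exact[OF that]] .
  have le: "vec_space.rank m (A x1) \<le> vec_space.rank m (A x2)"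
    if x1: "nonzero_pt d x1" and x2: "nonzero_pt d x2" for x1 x2
  proof -
    obtain y where "nonzero_pt d y" "vec_space.rank m (A x1) \<le> vec_space.rank m (A y)"
      "vec_space.rank q (Q x2) \<le> vec_space.rank q (Q y)"
      using nonzero_pt_ranks_ge[OF hA hQ x1 x2] .
    then show ?thesis using rank_sum[of y] rank_sum[OF x2] by linarith
  qed
  show ?thesis
  proof (cases "\<exists>x0 :: nat \<Rightarrow> 'a. nonzero_pt d x0")
    case True
    then obtain x0 :: "nat \<Rightarrow> 'a" where "nonzero_pt d x0" by blast
    with le show ?thesis by (intro exI[of _ "vec_space.rank m (A x0)"]) (auto intro: antisym)
  qed auto
qed

section \<open>Exact symbols for a symbol of constant rank\<close>

definition minor_index_pairs :: "nat \<Rightarrow> nat \<Rightarrow> nat \<Rightarrow> nat \<Rightarrow> (nat list \<times> nat list) list" where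
  "minor_index_pairs a m b n = List.product (List.n_lists a [0..<m]) (List.n_lists b [0..<n])"

lemma minor_index_pairs_nth:
  assumes "c < length (minor_index_pairs a m b n)" "minor_index_pairs a m b n ! c = (fs, gs)"
  shows "i < a \<Longrightarrow> fs ! i < m" "j < b \<Longrightarrow> gs ! j < n"
proof -
  have "(fs, gs) \<in> set (minor_index_pairs a m b n)" using assms by (metis nth_mem)
  then have "length fs = a" "set fs \<subseteq> {0..<m}" "length gs = b" "set gs \<subseteq> {0..<n}"
    unfolding minor_index_pairs_def by (auto simp: set_n_lists)
  then show "i < a \<Longrightarrow> fs ! i < m" "j < b \<Longrightarrow> gs ! j < n"
    by (metis atLeastLessThan_iff nth_mem subsetD)+
qed

lemma minor_index_pairs_complete:
  assumes "\<And>i. i < a \<Longrightarrow> f i < m" "\<And>j. j < b \<Longrightarrow> g j < n"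
  obtains c where "c < length (minor_index_pairs a m b n)"
    "minor_index_pairs a m b n ! c = (map f [0..<a], map g [0..<b])"
proof -
  have "(map f [0..<a], map g [0..<b]) \<in> set (minor_index_pairs a m b n)"
    using assms unfolding minor_index_pairs_def by (auto simp: set_n_lists)
  then show ?thesis using that by (metis in_set_conv_nth)
qed

lemma mat_imageI:
  assumes A: "A \<in> carrier_mat m n" and w: "w \<in> carrier_vec m" and g: "\<And>j. j < r \<Longrightarrow> g j < n"
    and comb: "\<And>i. i < m \<Longrightarrow> w $ i = (\<Sum>j<r. c j * A $$ (i, g j))"
  shows "w \<in> mat_image A"
proof -
  define u where "u = vec n (\<lambda>l. \<Sum>j<r. if g j = l then c j else 0)"
  have "w = A *\<^sub>v u"
  proof (rule eq_vecI)
    fix i assume "i < dim_vec (A *\<^sub>v u)"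
    then have i: "i < m" using A by simp
    have "(A *\<^sub>v u) $ i = (\<Sum>l<n. A $$ (i, l) * (\<Sum>j<r. if g j = l then c j else 0))"
      using A i by (simp add: u_def scalar_prod_def atLeast0LessThan)
    also have "\<dots> = (\<Sum>j<r. A $$ (i, g j) * c j)" by (rule sum_mult_pushforward[OF g])
    finally show "w $ i = (A *\<^sub>v u) $ i" using comb[OF i] by (simp add: mult.commute)
  qed (use A w in simp)
  then show ?thesis using A unfolding mat_image_def u_def by auto
qed

text \<open>Row \<open>(fs, gs)\<close> of \<open>cokernel_mat r A\<close> is the linear form sending \<open>w\<close> to the
  \<open>(r+1)\<close>-minor of the bordered matrix \<open>[A | w]\<close> on rows \<open>fs\<close> and columns \<open>gs\<close> followed by
  \<open>w\<close>, expanded along \<open>w\<close>.\<close>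
definition cokernel_mat :: "nat \<Rightarrow> 'a::comm_ring_1 mat \<Rightarrow> 'a mat" where
  "cokernel_mat r A = (let I = minor_index_pairs (Suc r) (dim_row A) r (dim_col A) in
     mat (length I) (dim_row A) (\<lambda>(c, j). case I ! c of (fs, gs) \<Rightarrow>
       \<Sum>a<Suc r. if fs ! a = j then (-1)^(a + r) * minor A (\<lambda>i. fs ! idx_skip a i) ((!) gs) r else 0))"

lemma cokernel_mat_carrier:
  "A \<in> carrier_mat m n \<Longrightarrow> cokernel_mat r A \<in> carrier_mat (length (minor_index_pairs (Suc r) m r n)) m"
  unfolding cokernel_mat_def Let_def by simp

lemma cokernel_mat_mult_vec:
  assumes A: "A \<in> carrier_mat m n" and w: "w \<in> carrier_vec m"
    and c: "c < length (minor_index_pairs (Suc r) m r n)" "minor_index_pairs (Suc r) m r n ! c = (fs, gs)"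
  shows "(cokernel_mat r A *\<^sub>v w) $ c
    = det (mat (Suc r) (Suc r) (\<lambda>(a, b). if b < r then A $$ (fs ! a, gs ! b) else w $ (fs ! a)))"
proof -
  have "(cokernel_mat r A *\<^sub>v w) $ c = (\<Sum>j<m. w $ j * (\<Sum>a<Suc r. if fs ! a = j
      then (-1)^(a + r) * minor A (\<lambda>i. fs ! idx_skip a i) ((!) gs) r else 0))"
    using A w c by (simp add: cokernel_mat_def Let_def scalar_prod_def atLeast0LessThan mult.commute
        del: sum.lessThan_Suc)
  also have "\<dots> = (\<Sum>a<Suc r. w $ (fs ! a) * ((-1)^(a + r) * minor A (\<lambda>i. fs ! idx_skip a i) ((!) gs) r))"
    by (rule sum_mult_pushforward) (use minor_index_pairs_nth[OF c] in auto)
  also have "\<dots> = det (mat (Suc r) (Suc r) (\<lambda>(a, b). if b < r then A $$ (fs ! a, gs ! b) else w $ (fs ! a)))"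
    by (rule det_bordered_col[symmetric])
  finally show ?thesis .
qed

lemma det_bordered_col_mult_vec:
  assumes A: "A \<in> carrier_mat m n" and u: "u \<in> carrier_vec n" and F: "\<And>a. a < Suc r \<Longrightarrow> F a < m"
  shows "det (mat (Suc r) (Suc r) (\<lambda>(a, b). if b < r then A $$ (F a, G b) else (A *\<^sub>v u) $ (F a)))
    = (\<Sum>l<n. u $ l * minor A F (idx_snoc r G l) (Suc r))"
proof -
  define C where "C a = (-1)^(a + r) * minor A (\<lambda>i. F (idx_skip a i)) G r" for a
  have "minor A F (idx_snoc r G l) (Suc r) = (\<Sum>a<Suc r. A $$ (F a, l) * C a)" if l: "l < n" for l
  proof -
    have "minor A F (idx_snoc r G l) (Suc r)
        = det (mat (Suc r) (Suc r) (\<lambda>(a, b). if b < r then A $$ (F a, G b) else col A l $ (F a)))"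
      unfolding minor_def using A F l by (intro arg_cong[where f = det] eq_matI) (auto simp: idx_snoc_def)
    then show ?thesis using A F l unfolding det_bordered_col C_def by simp
  qed
  then have "(\<Sum>l<n. u $ l * minor A F (idx_snoc r G l) (Suc r))
      = (\<Sum>l<n. \<Sum>a<Suc r. u $ l * (A $$ (F a, l) * C a))"
    by (simp add: sum_distrib_left del: sum.lessThan_Suc)
  also have "\<dots> = (\<Sum>a<Suc r. (\<Sum>l<n. A $$ (F a, l) * u $ l) * C a)"
    by (subst sum.swap) (simp add: sum_distrib_left sum_distrib_right ac_simps del: sum.lessThan_Suc)
  also have "\<dots> = (\<Sum>a<Suc r. (A *\<^sub>v u) $ (F a) * C a)"
    using A u F by (simp add: scalar_prod_def atLeast0LessThan)
  finally show ?thesis unfolding det_bordered_col C_def ..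
qed

lemma cokernel_mat_mult_image:
  fixes A :: "'a::field mat"
  assumes A: "A \<in> carrier_mat m n" and rank: "vec_space.rank m A = r" and u: "u \<in> carrier_vec n"
  shows "cokernel_mat r A *\<^sub>v (A *\<^sub>v u) = 0\<^sub>v (length (minor_index_pairs (Suc r) m r n))"
proof (rule eq_vecI)
  fix c assume "c < dim_vec (0\<^sub>v (length (minor_index_pairs (Suc r) m r n)) :: 'a vec)"
  then have c: "c < length (minor_index_pairs (Suc r) m r n)" by simp
  obtain fs gs where fsgs: "minor_index_pairs (Suc r) m r n ! c = (fs, gs)" by fastforce
  note idx = minor_index_pairs_nth[OF c fsgs]
  have "minor A ((!) fs) (idx_snoc r ((!) gs) l) (Suc r) = 0" if "l < n" for l
    using idx that rank A
    by (intro vec_space.minor_eq_0_if_rank_less[OF A]) (auto simp: valid_minor_def idx_snoc_def)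
  then show "(cokernel_mat r A *\<^sub>v (A *\<^sub>v u)) $ c = 0\<^sub>v (length (minor_index_pairs (Suc r) m r n)) $ c"
    using A u c idx unfolding cokernel_mat_mult_vec[OF A mult_mat_vec_carrier[OF A u] c fsgs]
    by (simp add: det_bordered_col_mult_vec)
qed (use cokernel_mat_carrier[OF A, of r] in auto)

lemma kernel_cokernel_mat_subset_image:
  fixes A :: "'a::field mat"
  assumes A: "A \<in> carrier_mat m n" and rank: "vec_space.rank m A = r"
    and w: "w \<in> carrier_vec m" and Qw: "cokernel_mat r A *\<^sub>v w = 0\<^sub>v (length (minor_index_pairs (Suc r) m r n))"
  shows "w \<in> mat_image A"
proof -
  obtain f g where fg: "valid_minor A f g r" "minor A f g r \<noteq> 0"
    by (rule vec_space.rank_minor_exists[OF A, unfolded rank])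
  have f: "f i < m" if "i < r" for i using fg(1) A that unfolding valid_minor_def by auto
  have g: "g j < n" if "j < r" for j using fg(1) A that unfolding valid_minor_def by auto
  define Aw where "Aw = mat m (Suc n) (\<lambda>(i, j). if j < n then A $$ (i, j) else w $ i)"
  have Aw: "Aw \<in> carrier_mat m (Suc n)" unfolding Aw_def by simp
  have "minor Aw f g r = minor A f g r"
    by (rule minor_cong) (simp add: Aw_def f g less_SucI)
  then have nz: "minor Aw f g r \<noteq> 0" using fg(2) by simp
  have vanish: "minor Aw (idx_cons i f) (idx_snoc r g n) (Suc r) = 0" if i: "i < m" for i
  proof -
    have fi: "idx_cons i f a < m" if "a < Suc r" for a using that i f by (auto simp: idx_cons_def)
    obtain c where c: "c < length (minor_index_pairs (Suc r) m r n)"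
      "minor_index_pairs (Suc r) m r n ! c = (map (idx_cons i f) [0..<Suc r], map g [0..<r])"
      by (rule minor_index_pairs_complete[OF fi g])
    have "minor Aw (idx_cons i f) (idx_snoc r g n) (Suc r) = (cokernel_mat r A *\<^sub>v w) $ c"
      unfolding cokernel_mat_mult_vec[OF A w c] minor_def
      by (intro arg_cong[where f = det] eq_matI) (auto simp: Aw_def idx_snoc_def fi g less_SucI simp del: upt_Suc)
    then show ?thesis using Qw c(1) by simp
  qed
  obtain c where c: "\<forall>i<m. Aw $$ (i, n) = (\<Sum>j<r. c j * Aw $$ (i, g j))"
    using col_in_span_of_minor_cols[OF Aw nz vanish] by blast
  have comb: "w $ i = (\<Sum>j<r. c j * A $$ (i, g j))" if "i < m" for i
  proof -
    have "w $ i = Aw $$ (i, n)" using that by (simp add: Aw_def)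
    also have "\<dots> = (\<Sum>j<r. c j * Aw $$ (i, g j))" using c that by blast
    also have "\<dots> = (\<Sum>j<r. c j * A $$ (i, g j))"
      using that by (intro sum.cong) (simp_all add: Aw_def g less_SucI)
    finally show ?thesis .
  qed
  show ?thesis by (rule mat_imageI[OF A w g comb])
qed

lemma mat_image_eq_kernel_cokernel_mat:
  fixes A :: "'a::field mat"
  assumes A: "A \<in> carrier_mat m n" and rank: "vec_space.rank m A = r"
  shows "mat_image A = mat_kernel (cokernel_mat r A)"
proof
  show "mat_image A \<subseteq> mat_kernel (cokernel_mat r A)"
  proof
    fix w assume "w \<in> mat_image A"
    then obtain u where u: "u \<in> carrier_vec n" and w: "w = A *\<^sub>v u"
      using A unfolding mat_image_def by auto
    show "w \<in> mat_kernel (cokernel_mat r A)"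
      unfolding w using A u cokernel_mat_mult_image[OF A rank u]
      by (intro mat_kernelI[OF cokernel_mat_carrier[OF A]]) auto
  qed
  show "mat_kernel (cokernel_mat r A) \<subseteq> mat_image A"
    using kernel_cokernel_mat_subset_image[OF A rank] mat_kernelD[OF cokernel_mat_carrier[OF A]]
    by blast
qed

lemma hom_symbol_cokernel_mat:
  assumes hA: "hom_symbol d k m n A"
  shows "hom_symbol d (r * k) (length (minor_index_pairs (Suc r) m r n)) m (\<lambda>\<xi>. cokernel_mat r (A \<xi>))"
  unfolding hom_symbol_def
proof (intro conjI allI impI)
  fix \<xi> show "cokernel_mat r (A \<xi>) \<in> carrier_mat (length (minor_index_pairs (Suc r) m r n)) m"
    by (rule cokernel_mat_carrier[OF hom_symbolD(1)[OF hA]])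
next
  fix c j assume c: "c < length (minor_index_pairs (Suc r) m r n)" and j: "j < m"
  obtain fs gs where fsgs: "minor_index_pairs (Suc r) m r n ! c = (fs, gs)" by fastforce
  note idx = minor_index_pairs_nth[OF c fsgs]
  have "hom_poly_fun d (r * k) (\<lambda>\<xi>. if fs ! a = j
      then (-1)^(a + r) * minor (A \<xi>) (\<lambda>i. fs ! idx_skip a i) ((!) gs) r else 0)" if "a < Suc r" for a
  proof (cases "fs ! a = j")
    case True
    have "hom_poly_fun d (r * k) (\<lambda>\<xi>. minor (A \<xi>) (\<lambda>i. fs ! idx_skip a i) ((!) gs) r)"
      using idx that by (intro hom_poly_fun_minor[OF hA]) (auto simp: idx_skip_def)
    then show ?thesis using True by (simp add: hom_poly_fun_cmult)
  qed (simp add: hom_poly_fun_zero)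
  then have "hom_poly_fun d (r * k) (\<lambda>\<xi>. \<Sum>a<Suc r. if fs ! a = j
      then (-1)^(a + r) * minor (A \<xi>) (\<lambda>i. fs ! idx_skip a i) ((!) gs) r else 0)"
    by (intro hom_poly_fun_sum) auto
  moreover have "cokernel_mat r (A \<xi>) $$ (c, j) = (\<Sum>a<Suc r. if fs ! a = j
      then (-1)^(a + r) * minor (A \<xi>) (\<lambda>i. fs ! idx_skip a i) ((!) gs) r else 0)" for \<xi>
    using c j fsgs hom_symbolD(1)[OF hA, of \<xi>]
    by (simp add: cokernel_mat_def Let_def carrier_matD del: sum.lessThan_Suc)
  ultimately show "hom_poly_fun d (r * k) (\<lambda>\<xi>. cokernel_mat r (A \<xi>) $$ (c, j))"
    by simp
qed

text \<open>Column \<open>(fs, gs)\<close> of \<open>kernel_mat r A\<close> lists the signed \<open>r\<close>-minors of the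
  \<open>r \<times> (r+1)\<close> submatrix on rows \<open>fs\<close> and columns \<open>gs\<close>, a generalised cross product: row \<open>i\<close>
  of \<open>A\<close> times this column is the \<open>(r+1)\<close>-minor on rows \<open>i # fs\<close> and columns \<open>gs\<close>.\<close>
definition kernel_mat :: "nat \<Rightarrow> 'a::comm_ring_1 mat \<Rightarrow> 'a mat" where
  "kernel_mat r A = (let J = minor_index_pairs r (dim_row A) (Suc r) (dim_col A) in
     mat (dim_col A) (length J) (\<lambda>(l, c). case J ! c of (fs, gs) \<Rightarrow>
       \<Sum>b<Suc r. if gs ! b = l then (-1)^b * minor A ((!) fs) (\<lambda>j. gs ! idx_skip b j) r else 0))"

lemma kernel_mat_carrier:
  "A \<in> carrier_mat m n \<Longrightarrow> kernel_mat r A \<in> carrier_mat n (length (minor_index_pairs r m (Suc r) n))"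
  unfolding kernel_mat_def Let_def by simp

lemma kernel_mat_index:
  assumes A: "A \<in> carrier_mat m n" and l: "l < n"
    and c: "c < length (minor_index_pairs r m (Suc r) n)" "minor_index_pairs r m (Suc r) n ! c = (fs, gs)"
  shows "kernel_mat r A $$ (l, c)
    = (\<Sum>b<Suc r. if gs ! b = l then (-1)^b * minor A ((!) fs) (\<lambda>j. gs ! idx_skip b j) r else 0)"
  using A l c by (simp add: kernel_mat_def Let_def del: sum.lessThan_Suc)

lemma mult_kernel_mat_index:
  assumes A: "A \<in> carrier_mat m n" and i: "i < m"
    and c: "c < length (minor_index_pairs r m (Suc r) n)" "minor_index_pairs r m (Suc r) n ! c = (fs, gs)"
  shows "(A * kernel_mat r A) $$ (i, c) = minor A (idx_cons i ((!) fs)) ((!) gs) (Suc r)"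
proof -
  have "(A * kernel_mat r A) $$ (i, c) = (\<Sum>l<n. A $$ (i, l) * (\<Sum>b<Suc r. if gs ! b = l
      then (-1)^b * minor A ((!) fs) (\<lambda>j. gs ! idx_skip b j) r else 0))"
    using A i c kernel_mat_carrier[OF A, of r]
    by (simp add: kernel_mat_index scalar_prod_def atLeast0LessThan del: sum.lessThan_Suc)
  also have "\<dots> = (\<Sum>b<Suc r. A $$ (i, gs ! b) * ((-1)^b * minor A ((!) fs) (\<lambda>j. gs ! idx_skip b j) r))"
    by (rule sum_mult_pushforward) (use minor_index_pairs_nth[OF c] in auto)
  also have "\<dots> = minor A (idx_cons i ((!) fs)) ((!) gs) (Suc r)"
    unfolding minor_def det_bordered_row ..
  finally show ?thesis .
qed

lemma mult_kernel_mat_eq_0: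
  fixes A :: "'a::field mat"
  assumes A: "A \<in> carrier_mat m n" and rank: "vec_space.rank m A = r"
  shows "A * kernel_mat r A = 0\<^sub>m m (length (minor_index_pairs r m (Suc r) n))"
proof (rule eq_matI)
  fix i c assume "i < dim_row (0\<^sub>m m (length (minor_index_pairs r m (Suc r) n)) :: 'a mat)"
    "c < dim_col (0\<^sub>m m (length (minor_index_pairs r m (Suc r) n)) :: 'a mat)"
  then have i: "i < m" and c: "c < length (minor_index_pairs r m (Suc r) n)" by auto
  obtain fs gs where fsgs: "minor_index_pairs r m (Suc r) n ! c = (fs, gs)" by fastforce
  note idx = minor_index_pairs_nth[OF c fsgs]
  have "minor A (idx_cons i ((!) fs)) ((!) gs) (Suc r) = 0"
    using idx i rank A
    by (intro vec_space.minor_eq_0_if_rank_less[OF A]) (auto simp: valid_minor_def idx_cons_def)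
  then show "(A * kernel_mat r A) $$ (i, c) = 0\<^sub>m m (length (minor_index_pairs r m (Suc r) n)) $$ (i, c)"
    using i c by (simp add: mult_kernel_mat_index[OF A i c fsgs])
qed (use kernel_mat_carrier[OF A, of r] A in auto)

text \<open>\<open>cl l\<close> is the column indexed by the rows \<open>f\<close> and the columns \<open>l # g\<close>.\<close>
lemma kernel_mat_cols_unit:
  assumes A: "A \<in> carrier_mat m n" and f: "\<And>i. i < r \<Longrightarrow> f i < m" and g: "\<And>j. j < r \<Longrightarrow> g j < n"
  obtains cl E where "\<forall>l<n. cl l < length (minor_index_pairs r m (Suc r) n)"
    "\<forall>l<n. \<forall>l'<n. kernel_mat r A $$ (l', cl l)
       = (if l = l' then minor A f g r else 0) + (\<Sum>j<r. if g j = l' then E l j else 0)"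
proof -
  let ?J = "minor_index_pairs r m (Suc r) n"
  define gs where "gs l = l # map g [0..<r]" for l
  define cl where "cl l = (SOME c. c < length ?J \<and> ?J ! c = (map f [0..<r], gs l))" for l
  define E where "E l j = (-1)^Suc j * minor A ((!) (map f [0..<r])) (\<lambda>i. gs l ! idx_skip (Suc j) i) r"
    for l j
  have cl: "cl l < length ?J \<and> ?J ! cl l = (map f [0..<r], gs l)" if l: "l < n" for l
  proof -
    have gsl: "gs l ! b < n" if "b < Suc r" for b
      using that l g by (cases b) (auto simp: gs_def)
    obtain c where c: "c < length ?J" "?J ! c = (map f [0..<r], map ((!) (gs l)) [0..<Suc r])"
      by (rule minor_index_pairs_complete[OF f gsl])
    have "map ((!) (gs l)) [0..<Suc r] = gs l"
      unfolding gs_def by (rule nth_equalityI) (auto simp del: upt_Suc)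
    then have "c < length ?J \<and> ?J ! c = (map f [0..<r], gs l)" using c by simp
    then show ?thesis unfolding cl_def by (rule someI)
  qed
  have col: "kernel_mat r A $$ (l', cl l)
      = (if l = l' then minor A f g r else 0) + (\<Sum>j<r. if g j = l' then E l j else 0)"
    if l: "l < n" and l': "l' < n" for l l'
  proof -
    from cl[OF l] have c: "cl l < length ?J" "?J ! cl l = (map f [0..<r], gs l)" by auto
    have "minor A ((!) (map f [0..<r])) (\<lambda>i. gs l ! idx_skip 0 i) r = minor A f g r"
      by (rule minor_cong) (simp add: gs_def idx_skip_def)
    moreover have "(\<Sum>j<r. if gs l ! Suc j = l' then E l j else 0) = (\<Sum>j<r. if g j = l' then E l j else 0)"
      by (rule sum.cong) (simp_all add: gs_def)
    moreover have "gs l ! 0 = l" by (simp add: gs_def)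
    ultimately show ?thesis
      unfolding kernel_mat_index[OF A l' c] sum.lessThan_Suc_shift E_def[symmetric]
      by (cases "l = l'") simp_all
  qed
  from cl col show ?thesis using that by blast
qed

lemma kernel_subset_image_kernel_mat:
  fixes A :: "'a::field mat"
  assumes A: "A \<in> carrier_mat m n" and rank: "vec_space.rank m A = r" and x: "x \<in> mat_kernel A"
  shows "x \<in> mat_image (kernel_mat r A)"
proof -
  let ?p = "length (minor_index_pairs r m (Suc r) n)" and ?B = "kernel_mat r A"
  have Bc: "?B \<in> carrier_mat n ?p" by (rule kernel_mat_carrier[OF A])
  have xc: "x \<in> carrier_vec n" and Ax: "A *\<^sub>v x = 0\<^sub>v m" using mat_kernelD[OF A x] by auto
  obtain f g where fg: "valid_minor A f g r" "minor A f g r \<noteq> 0"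
    by (rule vec_space.rank_minor_exists[OF A, unfolded rank])
  let ?\<Delta> = "minor A f g r"
  have f: "f i < m" if "i < r" for i using fg(1) A that unfolding valid_minor_def by auto
  have g: "g j < n" if "j < r" for j using fg(1) A that unfolding valid_minor_def by auto
  obtain cl E where cl: "\<forall>l<n. cl l < ?p"
    and col: "\<forall>l<n. \<forall>l'<n. ?B $$ (l', cl l)
      = (if l = l' then ?\<Delta> else 0) + (\<Sum>j<r. if g j = l' then E l j else 0)"
    by (rule kernel_mat_cols_unit[OF A f g])
  define u where "u = vec ?p (\<lambda>c. \<Sum>l<n. if cl l = c then x $ l / ?\<Delta> else 0)"
  have u: "u \<in> carrier_vec ?p" unfolding u_def by simp
  define e where "e j = (\<Sum>l<n. E l j * (x $ l / ?\<Delta>))" for j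
  define z where "z = ?B *\<^sub>v u - x"
  have z: "z \<in> carrier_vec n" unfolding z_def using Bc u xc by simp
  have z_entry: "z $ l' = (\<Sum>j<r. if g j = l' then e j else 0)" if l': "l' < n" for l'
  proof -
    have "(?B *\<^sub>v u) $ l' = (\<Sum>c<?p. ?B $$ (l', c) * (\<Sum>l<n. if cl l = c then x $ l / ?\<Delta> else 0))"
      using l' Bc by (simp add: u_def scalar_prod_def atLeast0LessThan)
    also have "\<dots> = (\<Sum>l<n. ?B $$ (l', cl l) * (x $ l / ?\<Delta>))"
      by (rule sum_mult_pushforward) (use cl in blast)
    also have "\<dots> = (\<Sum>l<n. (if l = l' then ?\<Delta> else 0) * (x $ l / ?\<Delta>))
        + (\<Sum>l<n. (\<Sum>j<r. if g j = l' then E l j else 0) * (x $ l / ?\<Delta>))"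
      unfolding sum.distrib[symmetric] using l'
      by (intro sum.cong refl) (simp only: lessThan_iff col[rule_format] distrib_right)
    also have "(\<Sum>l<n. (if l = l' then ?\<Delta> else 0) * (x $ l / ?\<Delta>)) = x $ l'"
    proof -
      have "(\<Sum>l<n. (if l = l' then ?\<Delta> else 0) * (x $ l / ?\<Delta>)) = (\<Sum>l<n. if l = l' then x $ l else 0)"
        using fg(2) by (intro sum.cong) auto
      then show ?thesis using l' by simp
    qed
    also have "(\<Sum>l<n. (\<Sum>j<r. if g j = l' then E l j else 0) * (x $ l / ?\<Delta>))
        = (\<Sum>j<r. if g j = l' then e j else 0)"
      unfolding e_def sum_distrib_right by (subst sum.swap) (auto intro: sum.cong)
    finally show ?thesis using l' Bc xc by (simp add: z_def)
  qed
  have "z \<in> mat_kernel A"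
  proof (rule mat_kernelI[OF A z])
    have "A *\<^sub>v (?B *\<^sub>v u) = (A * ?B) *\<^sub>v u" using A Bc u by simp
    also have "\<dots> = 0\<^sub>v m"
      unfolding mult_kernel_mat_eq_0[OF A rank] using u by (intro eq_vecI) auto
    finally show "A *\<^sub>v z = 0\<^sub>v m" using A Bc u xc Ax by (simp add: z_def mult_minus_distrib_mat_vec)
  qed
  then have "z = 0\<^sub>v n" by (rule kernel_vec_on_minor_cols_eq_0[OF A fg _ z_entry])
  then have "z $ i = 0" if "i < n" for i using that by simp
  then have "x = ?B *\<^sub>v u" using Bc u xc by (intro eq_vecI) (auto simp: z_def)
  then show ?thesis using Bc u unfolding mat_image_def by auto
qed

lemma mat_image_kernel_mat_eq_kernel:
  fixes A :: "'a::field mat"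
  assumes A: "A \<in> carrier_mat m n" and rank: "vec_space.rank m A = r"
  shows "mat_image (kernel_mat r A) = mat_kernel A"
proof
  let ?B = "kernel_mat r A"
  have B: "?B \<in> carrier_mat n (length (minor_index_pairs r m (Suc r) n))"
    by (rule kernel_mat_carrier[OF A])
  show "mat_image ?B \<subseteq> mat_kernel A"
  proof
    fix x assume "x \<in> mat_image ?B"
    then obtain u where u: "u \<in> carrier_vec (length (minor_index_pairs r m (Suc r) n))"
      and x: "x = ?B *\<^sub>v u"
      using B unfolding mat_image_def by auto
    have "A *\<^sub>v x = (A * ?B) *\<^sub>v u" using A B u x by simp
    also have "\<dots> = 0\<^sub>v m"
      unfolding mult_kernel_mat_eq_0[OF A rank] using u by (intro eq_vecI) auto
    finally show "x \<in> mat_kernel A" using B u x by (intro mat_kernelI[OF A]) auto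
  qed
  show "mat_kernel A \<subseteq> mat_image ?B"
    using kernel_subset_image_kernel_mat[OF A rank] by blast
qed

lemma hom_symbol_kernel_mat:
  assumes hA: "hom_symbol d k m n A"
  shows "hom_symbol d (r * k) n (length (minor_index_pairs r m (Suc r) n)) (\<lambda>\<xi>. kernel_mat r (A \<xi>))"
  unfolding hom_symbol_def
proof (intro conjI allI impI)
  fix \<xi> show "kernel_mat r (A \<xi>) \<in> carrier_mat n (length (minor_index_pairs r m (Suc r) n))"
    by (rule kernel_mat_carrier[OF hom_symbolD(1)[OF hA]])
next
  fix l c assume l: "l < n" and c: "c < length (minor_index_pairs r m (Suc r) n)"
  obtain fs gs where fsgs: "minor_index_pairs r m (Suc r) n ! c = (fs, gs)" by fastforce
  note idx = minor_index_pairs_nth[OF c fsgs]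
  have "hom_poly_fun d (r * k) (\<lambda>\<xi>. if gs ! b = l
      then (-1)^b * minor (A \<xi>) ((!) fs) (\<lambda>j. gs ! idx_skip b j) r else 0)" if "b < Suc r" for b
  proof (cases "gs ! b = l")
    case True
    have "hom_poly_fun d (r * k) (\<lambda>\<xi>. minor (A \<xi>) ((!) fs) (\<lambda>j. gs ! idx_skip b j) r)"
      using idx that by (intro hom_poly_fun_minor[OF hA]) (auto simp: idx_skip_def)
    then show ?thesis using True by (simp add: hom_poly_fun_cmult)
  qed (simp add: hom_poly_fun_zero)
  then show "hom_poly_fun d (r * k) (\<lambda>\<xi>. kernel_mat r (A \<xi>) $$ (l, c))"
    unfolding kernel_mat_index[OF hom_symbolD(1)[OF hA] l c fsgs] by (intro hom_poly_fun_sum) auto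
qed

lemma exact_symbols_if_constant_rank:
  fixes A :: "(nat \<Rightarrow> 'a::field) \<Rightarrow> 'a mat"
  assumes hA: "hom_symbol d k m n A"
    and rank: "\<forall>x. nonzero_pt d x \<longrightarrow> vec_space.rank m (A x) = r"
  shows "\<exists>p q B Q. hom_symbol d (r * k) n p B \<and> hom_symbol d (r * k) q m Q \<and>
    (\<forall>y. nonzero_pt d y \<longrightarrow> mat_image (B y) = mat_kernel (A y) \<and> mat_image (A y) = mat_kernel (Q y))"
  using hom_symbol_kernel_mat[OF hA] hom_symbol_cokernel_mat[OF hA] rank
    mat_image_kernel_mat_eq_kernel[OF hom_symbolD(1)[OF hA]]
    mat_image_eq_kernel_cokernel_mat[OF hom_symbolD(1)[OF hA]]
  by blast

lemma constant_rank_iff_exact_symbols: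
  fixes A :: "(nat \<Rightarrow> 'a::field_char_0) \<Rightarrow> 'a mat"
  assumes hA: "hom_symbol d k m n A"
  shows "((\<exists>r. \<forall>x. nonzero_pt d x \<longrightarrow> vec_space.rank m (A x) = r)
      \<longleftrightarrow> (\<exists>p q kB kQ B Q. hom_symbol d kB n p B \<and> hom_symbol d kQ q m Q \<and>
          (\<forall>y. nonzero_pt d y \<longrightarrow> mat_image (B y) = mat_kernel (A y) \<and> mat_image (A y) = mat_kernel (Q y))))
    \<and> (\<forall>r. (\<forall>x. nonzero_pt d x \<longrightarrow> vec_space.rank m (A x) = r) \<longrightarrow>
        (\<exists>p q B Q. hom_symbol d (r * k) n p B \<and> hom_symbol d (r * k) q m Q \<and>
          (\<forall>y. nonzero_pt d y \<longrightarrow> mat_image (B y) = mat_kernel (A y) \<and> mat_image (A y) = mat_kernel (Q y))))"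
proof (intro conjI iffI allI impI)
  assume "\<exists>r. \<forall>x. nonzero_pt d x \<longrightarrow> vec_space.rank m (A x) = r"
  then obtain r where "\<forall>x. nonzero_pt d x \<longrightarrow> vec_space.rank m (A x) = r" ..
  from exact_symbols_if_constant_rank[OF hA this]
  show "\<exists>p q kB kQ B Q. hom_symbol d kB n p B \<and> hom_symbol d kQ q m Q \<and>
      (\<forall>y. nonzero_pt d y \<longrightarrow> mat_image (B y) = mat_kernel (A y) \<and> mat_image (A y) = mat_kernel (Q y))"
    by blast
next
  assume "\<exists>p q kB kQ B Q. hom_symbol d kB n p B \<and> hom_symbol d kQ q m Q \<and>
      (\<forall>y. nonzero_pt d y \<longrightarrow> mat_image (B y) = mat_kernel (A y) \<and> mat_image (A y) = mat_kernel (Q y))"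
  then obtain q kQ and Q :: "(nat \<Rightarrow> 'a) \<Rightarrow> 'a mat" where hQ: "hom_symbol d kQ q m Q"
    and exact: "\<forall>y. nonzero_pt d y \<longrightarrow> mat_image (A y) = mat_kernel (Q y)"
    by blast
  show "\<exists>r. \<forall>x. nonzero_pt d x \<longrightarrow> vec_space.rank m (A x) = r"
    using constant_rank_if_exact[OF hA hQ] exact by blast
qed (rule exact_symbols_if_constant_rank[OF hA])

theorem theorem2p2:
  shows
  "(\<forall>(d::nat) (k::nat) (m::nat) (n::nat) (A :: (nat \<Rightarrow> real) \<Rightarrow> real mat).
     hom_symbol d k m n A \<longrightarrow>
     (((\<exists>r::nat. \<forall>x::nat \<Rightarrow> real. nonzero_pt d x \<longrightarrow> vec_space.rank m (A x) = r)
        \<longleftrightarrow>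
       (\<exists>(p::nat) (q::nat) (kB::nat) (kQ::nat)
          (B :: (nat \<Rightarrow> real) \<Rightarrow> real mat) (Q :: (nat \<Rightarrow> real) \<Rightarrow> real mat).
          hom_symbol d kB n p B \<and> hom_symbol d kQ q m Q \<and>
          (\<forall>y::nat \<Rightarrow> real. nonzero_pt d y \<longrightarrow>
              mat_image (B y) = mat_kernel (A y) \<and> mat_image (A y) = mat_kernel (Q y))))
      \<and>
      (\<forall>r::nat. (\<forall>x::nat \<Rightarrow> real. nonzero_pt d x \<longrightarrow> vec_space.rank m (A x) = r) \<longrightarrow>
         (\<exists>(p::nat) (q::nat)
            (B :: (nat \<Rightarrow> real) \<Rightarrow> real mat) (Q :: (nat \<Rightarrow> real) \<Rightarrow> real mat).
            hom_symbol d (r * k) n p B \<and> hom_symbol d (r * k) q m Q \<and>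
            (\<forall>y::nat \<Rightarrow> real. nonzero_pt d y \<longrightarrow>
               mat_image (B y) = mat_kernel (A y) \<and> mat_image (A y) = mat_kernel (Q y))))))
   \<and>
   (\<forall>(d'::nat) (k'::nat) (m'::nat) (n'::nat) (A' :: (nat \<Rightarrow> complex) \<Rightarrow> complex mat).
     hom_symbol d' k' m' n' A' \<longrightarrow>
     (((\<exists>r'::nat. \<forall>x'::nat \<Rightarrow> complex. nonzero_pt d' x' \<longrightarrow> vec_space.rank m' (A' x') = r')
        \<longleftrightarrow>
       (\<exists>(p'::nat) (q'::nat) (kB'::nat) (kQ'::nat)
          (B' :: (nat \<Rightarrow> complex) \<Rightarrow> complex mat) (Q' :: (nat \<Rightarrow> complex) \<Rightarrow> complex mat).
          hom_symbol d' kB' n' p' B' \<and> hom_symbol d' kQ' q' m' Q' \<and>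
          (\<forall>y'::nat \<Rightarrow> complex. nonzero_pt d' y' \<longrightarrow>
              mat_image (B' y') = mat_kernel (A' y') \<and> mat_image (A' y') = mat_kernel (Q' y'))))
      \<and>
      (\<forall>r'::nat. (\<forall>x'::nat \<Rightarrow> complex. nonzero_pt d' x' \<longrightarrow> vec_space.rank m' (A' x') = r') \<longrightarrow>
         (\<exists>(p'::nat) (q'::nat)
            (B' :: (nat \<Rightarrow> complex) \<Rightarrow> complex mat) (Q' :: (nat \<Rightarrow> complex) \<Rightarrow> complex mat).
            hom_symbol d' (r' * k') n' p' B' \<and> hom_symbol d' (r' * k') q' m' Q' \<and>
            (\<forall>y'::nat \<Rightarrow> complex. nonzero_pt d' y' \<longrightarrow>
               mat_image (B' y') = mat_kernel (A' y') \<and> mat_image (A' y') = mat_kernel (Q' y'))))))"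
  by (rule conjI; intro allI impI; erule constant_rank_iff_exact_symbols)

end
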